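(* $\mathtt{incl}$-$\mathtt{ESO}$-$\mathtt{HORN}\subseteq\mathtt{Trellis}$.
   Context: Fix a finite alphabet $\Sigma$. A nonempty word $w=w_1\cdots w_n$ is represented by the structure $\langle w\rangle=([1,n];(Q_s)_{s\in\Sigma},\mathtt{min},\mathtt{max},\mathtt{suc},\mathtt{pred})$ with $Q_s(i)\iff w_i=s$, $\mathtt{min}(i)\iff i=1$, $\mathtt{max}(i)\iff i=n$, $\mathtt{suc}(i)=\min(i+1,n)$, $\mathtt{pred}(i)=\max(i-1,1)$. For an integer $a$, $x+a$ denotes $\mathtt{suc}^a(x)$ if $a\ge0$ and $\mathtt{pred}^{-a}(x)$ if $a<0$; $y-b=\mathtt{pred}^b(y)$. An inclusion Horn formula is $\Phi=\exists\mathbf{R}\forall x\forall y\,\psi(x,y)$, $\mathbf{R}$ a finite set of binary relation symbols, $\psi$ a conjunction of Horn clauses over $\{(Q_s)_{s\in\Sigma},\mathtt{min},\mathtt{max},\mathtt{suc},\mathtt{pred}\}\cup\mathbf{R}\cup\{=,\le,<\}$, each of the form $x\le y\wedge\delta_1\wedge\cdots\wedge\delta_r\to\delta_0$ with $\delta_0$ an atom $R(x,y)$ ($R\in\mathbf{R}$) or $\bot$, each $\delta_i$ one of: $U(x+a)$, $\neg U(x+a)$, $U(y+a)$, $\neg U(y+a)$ for $U\in\{(Q_s)_{s\in\Sigma},\mathtt{min},\mathtt{max}\}$, $a\in\mathbb Z$; $x=y$ or $x<y$; $S(x+a,y-b)\wedge x+a\le y-b$ with $S\in\mathbf{R}$,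 $a,b\ge0$. $\mathtt{incl}$-$\mathtt{ESO}$-$\mathtt{HORN}$ is the class of languages $\{w\in\Sigma^+:\langle w\rangle\models\Phi\}$. A one-way cellular automaton (OCA) is $(Q,\Sigma,Q_{accept},\{-1,0\},\delta)$ with finite $Q\supseteq\Sigma$, $Q_{accept}\subseteq Q$, $\delta:Q^2\to Q$; on input $w=w_1\cdots w_n$ it uses cells $1,\dots,n$ (cells outside permanently in a state $\sharp$), with $\langle c,1\rangle=w_c$ and $\langle c,t\rangle=\delta(\langle c-1,t-1\rangle,\langle c,t-1\rangle)$ for $t>1$. $\mathtt{Trellis}$ is the class of languages $L\subseteq\Sigma^+$ such that some OCA satisfies $w\in L\iff\langle n,n\rangle\in Q_{accept}$ for all $w$ of length $n$ (equivalently, languages accepted by trellis automata). *)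

theory Defs
  imports Main
begin

text \<open>A nonempty word w of length n is the structure on positions 1..n.
  Position i carries the letter w ! (i - 1).\<close>

definition suc_w :: "nat \<Rightarrow> nat \<Rightarrow> nat" where
  "suc_w n i = min (i + 1) n"

definition pred_w :: "nat \<Rightarrow> nat" where
  "pred_w i = max (i - 1) 1"

definition shift :: "nat \<Rightarrow> nat \<Rightarrow> int \<Rightarrow> nat" where
  "shift n x a = (if a \<ge> 0 then (suc_w n ^^ nat a) x else (pred_w ^^ nat (- a)) x)"

definition backw :: "nat \<Rightarrow> nat \<Rightarrow> nat" where
  "backw y b = (pred_w ^^ b) y"

text \<open>Relation symbols of R are represented by natural numbers; a formula
  mentions only finitely many of them.\<close>

datatype 's upred = Q 's | MinP | MaxP

datatype 's hyp =
    UX "'s upred" int bool      \<comment> \<open>U(x+a) if bool is True, \<not>U(x+a) otherwise\<close>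
  | UY "'s upred" int bool      \<comment> \<open>U(y+a) / \<not>U(y+a)\<close>
  | XeqY
  | XltY
  | RelH nat nat nat             \<comment> \<open>S(x+a, y-b) \<and> x+a \<le> y-b, with a b \<ge> 0\<close>

text \<open>Head: Some R means R(x,y), None means \<bottom>.\<close>
type_synonym 's clause = "'s hyp list \<times> nat option"

text \<open>An inclusion Horn formula \<exists>R \<forall>x \<forall>y \<psi>, \<psi> a finite conjunction of clauses.\<close>
type_synonym 's horn_formula = "'s clause list"

fun upred_holds :: "'s list \<Rightarrow> 's upred \<Rightarrow> nat \<Rightarrow> bool" where
  "upred_holds w (Q s) i = (w ! (i - 1) = s)"
| "upred_holds w MinP i = (i = 1)"
| "upred_holds w MaxP i = (i = length w)"

fun hyp_holds :: "'s list \<Rightarrow> (nat \<Rightarrow> nat \<Rightarrow> nat \<Rightarrow> bool) \<Rightarrow> nat \<Rightarrow> nat \<Rightarrow> 's hyp \<Rightarrow> bool" where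
  "hyp_holds w I x y (UX U a p) = (upred_holds w U (shift (length w) x a) = p)"
| "hyp_holds w I x y (UY U a p) = (upred_holds w U (shift (length w) y a) = p)"
| "hyp_holds w I x y XeqY = (x = y)"
| "hyp_holds w I x y XltY = (x < y)"
| "hyp_holds w I x y (RelH S a b) =
     (I S (shift (length w) x (int a)) (backw y b) \<and> shift (length w) x (int a) \<le> backw y b)"

fun head_holds :: "(nat \<Rightarrow> nat \<Rightarrow> nat \<Rightarrow> bool) \<Rightarrow> nat \<Rightarrow> nat \<Rightarrow> nat option \<Rightarrow> bool" where
  "head_holds I x y None = False"
| "head_holds I x y (Some R) = I R x y"

definition clause_holds :: "'s list \<Rightarrow> (nat \<Rightarrow> nat \<Rightarrow> nat \<Rightarrow> bool) \<Rightarrow> nat \<Rightarrow> nat \<Rightarrow> 's clause \<Rightarrow> bool" where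
  "clause_holds w I x y cl =
     ((x \<le> y \<and> (\<forall>h \<in> set (fst cl). hyp_holds w I x y h)) \<longrightarrow> head_holds I x y (snd cl))"

text \<open>I R is the interpretation of relation symbol R (as a binary relation
  on positions; only its values on [1,n] matter).\<close>
definition horn_sat :: "'s horn_formula \<Rightarrow> 's list \<Rightarrow> bool" where
  "horn_sat \<Phi> w = (\<exists>I. \<forall>x \<in> {1..length w}. \<forall>y \<in> {1..length w}.
       \<forall>cl \<in> set \<Phi>. clause_holds w I x y cl)"

definition horn_lang :: "'s horn_formula \<Rightarrow> 's list set" where
  "horn_lang \<Phi> = {w. w \<noteq> [] \<and> horn_sat \<Phi> w}"

definition incl_ESO_HORN :: "'s list set set" where
  "incl_ESO_HORN = {L. \<exists>\<Phi>. L = horn_lang \<Phi>}"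

text \<open>States are natural numbers from a finite set Qs; input letters are
  embedded injectively into Qs by emb; bd is the border state \<sharp>;
  delta (left neighbour) (own state).  oca_run w t c is the state of cell c
  (1 \<le> c \<le> n) at time t+1.\<close>

fun oca_run :: "(nat \<Rightarrow> nat \<Rightarrow> nat) \<Rightarrow> nat \<Rightarrow> ('s \<Rightarrow> nat) \<Rightarrow> 's list \<Rightarrow> nat \<Rightarrow> nat \<Rightarrow> nat" where
  "oca_run \<delta> bd emb w 0 c = emb (w ! (c - 1))"
| "oca_run \<delta> bd emb w (Suc t) c =
     \<delta> (if c \<le> 1 then bd else oca_run \<delta> bd emb w t (c - 1)) (oca_run \<delta> bd emb w t c)"

definition oca_accepts :: "(nat \<Rightarrow> nat \<Rightarrow> nat) \<Rightarrow> nat \<Rightarrow> ('s \<Rightarrow> nat) \<Rightarrow> nat set \<Rightarrow> 's list \<Rightarrow> bool" where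
  "oca_accepts \<delta> bd emb F w = (oca_run \<delta> bd emb w (length w - 1) (length w) \<in> F)"

definition Trellis :: "'s list set set" where
  "Trellis = {L. \<exists>(Qs :: nat set) F \<delta> bd (emb :: 's \<Rightarrow> nat).
      finite Qs \<and> F \<subseteq> Qs \<and> bd \<in> Qs \<and> inj emb \<and> range emb \<subseteq> Qs \<and>
      (\<forall>p \<in> Qs. \<forall>q \<in> Qs. \<delta> p q \<in> Qs) \<and>
      L \<subseteq> {w. w \<noteq> []} \<and>
      (\<forall>w. w \<noteq> [] \<longrightarrow> (w \<in> L \<longleftrightarrow> oca_accepts \<delta> bd emb F w))}"

end

theory Submission
  imports Defs
begin

text \<open>A hypothesis looks at most a bounded distance, the radius of the formula, away from \<open>x\<close>
  and \<open>y\<close>, and uses atoms only on subintervals of \<open>[x, y]\<close>. Hence the least model on the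
  intervals inside a factor \<open>u\<close> of the input depends only on \<open>u\<close> and on boundedly many letters
  around it, and all of it that can matter later fits into a finite profile of \<open>u\<close>. The profile
  of \<open>u\<close> is determined by the profiles of \<open>u\<close> without its last and without its first letter:
  an interval of \<open>u\<close> other than \<open>u\<close> itself misses one of these letters, and the atoms on \<open>u\<close>
  itself depend only on its ends and on atoms on smaller intervals. So a one-way cellular automaton
  whose cells hold the profiles of the factors they span ends with the profile of the whole
  input, which tells whether a clause with head \<open>\<bottom>\<close> fires, i.e. whether the formula fails.\<close>

lemma oca_run_eq_factor:
  assumes step: "\<And>u. 2 \<le> length u \<Longrightarrow> \<delta> (f (butlast u)) (f (tl u)) = f u"
    and emb: "\<And>a. emb a = f [a]"
    and "t < c" "c \<le> length w"
  shows "oca_run \<delta> bd emb w t c = f (take (Suc t) (drop (c - Suc t) w))"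
  using assms(3,4)
proof (induction t arbitrary: c)
  case 0
  then have "take (Suc 0) (drop (c - Suc 0) w) = [w ! (c - 1)]"
    by (simp add: take_Suc_conv_app_nth)
  then show ?case by (simp add: emb)
next
  case (Suc t)
  let ?u = "take (Suc (Suc t)) (drop (c - Suc (Suc t)) w)"
  have butlast: "butlast ?u = take (Suc t) (drop (c - 1 - Suc t) w)"
    using Suc.prems by (simp add: butlast_take)
  have "c - Suc t = Suc (c - Suc (Suc t))" using Suc.prems by arith
  then have tl: "tl ?u = take (Suc t) (drop (c - Suc t) w)"
    by (simp add: tl_take tl_drop drop_Suc)
  have "oca_run \<delta> bd emb w (Suc t) c = \<delta> (oca_run \<delta> bd emb w t (c - 1)) (oca_run \<delta> bd emb w t c)"
    using Suc.prems by simp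
  also have "\<dots> = \<delta> (f (butlast ?u)) (f (tl ?u))"
    using Suc.IH[of "c - 1"] Suc.IH[of c] Suc.prems butlast tl by simp
  also have "\<dots> = f ?u" using Suc.prems by (intro step) simp
  finally show ?case .
qed

lemma exists_transition_function:
  assumes cong: "\<And>u v. 2 \<le> length u \<Longrightarrow> 2 \<le> length v \<Longrightarrow> f (butlast u) = f (butlast v)
                 \<Longrightarrow> f (tl u) = f (tl v) \<Longrightarrow> f u = f v"
  obtains \<delta> where "\<And>u. 2 \<le> length u \<Longrightarrow> \<delta> (f (butlast u)) (f (tl u)) = f u"
    and "\<And>p q. \<delta> p q \<in> insert d (f ` {w. w \<noteq> []})"
proof -
  define splits where "splits p q u \<longleftrightarrow> 2 \<le> length u \<and> f (butlast u) = p \<and> f (tl u) = q" for p q u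
  define \<delta> where "\<delta> p q = (if \<exists>u. splits p q u then f (SOME u. splits p q u) else d)" for p q
  have "\<delta> (f (butlast u)) (f (tl u)) = f u" if u: "2 \<le> length u" for u
  proof -
    have ex: "\<exists>v. splits (f (butlast u)) (f (tl u)) v" using u unfolding splits_def by blast
    then have "splits (f (butlast u)) (f (tl u)) (SOME v. splits (f (butlast u)) (f (tl u)) v)"
      by (rule someI_ex)
    then have "f (SOME v. splits (f (butlast u)) (f (tl u)) v) = f u"
      using cong[OF _ u] unfolding splits_def by blast
    then show ?thesis using ex unfolding \<delta>_def by simp
  qed
  moreover have "\<delta> p q \<in> insert d (f ` {w. w \<noteq> []})" for p q
  proof (cases "\<exists>u. splits p q u")
    case True
    then have "splits p q (SOME u. splits p q u)" by (rule someI_ex)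
    then have "(SOME u. splits p q u) \<noteq> []" unfolding splits_def by auto
    then show ?thesis using True unfolding \<delta>_def by simp
  qed (simp add: \<delta>_def)
  ultimately show thesis by (rule that)
qed

lemma compositional_code_in_Trellis:
  fixes f :: "'s list \<Rightarrow> nat"
  assumes fin: "finite (f ` {w. w \<noteq> []})"
    and cong: "\<And>u v. 2 \<le> length u \<Longrightarrow> 2 \<le> length v \<Longrightarrow> f (butlast u) = f (butlast v)
                 \<Longrightarrow> f (tl u) = f (tl v) \<Longrightarrow> f u = f v"
    and singleton_inj: "\<And>a b. f [a] = f [b] \<Longrightarrow> a = b"
  shows "{w. w \<noteq> [] \<and> f w \<in> F} \<in> Trellis"
proof -
  define Qs where "Qs = insert 0 (f ` {w. w \<noteq> []})"
  obtain \<delta> where step: "\<And>u. 2 \<le> length u \<Longrightarrow> \<delta> (f (butlast u)) (f (tl u)) = f u"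
      and closed: "\<And>p q. \<delta> p q \<in> Qs"
    unfolding Qs_def by (rule exists_transition_function[of f 0, OF cong]) blast+
  define emb where "emb a = f [a]" for a
  have run: "oca_run \<delta> 0 emb w (length w - 1) (length w) = f w" if "w \<noteq> []" for w
    using oca_run_eq_factor[of \<delta> f emb "length w - 1" "length w" w 0] step that
    by (simp add: emb_def)
  have "f w \<in> Qs" if "w \<noteq> []" for w using that unfolding Qs_def by blast
  show ?thesis unfolding Trellis_def
  proof (intro CollectI exI conjI)
    show "finite Qs" using fin unfolding Qs_def by simp
    show "F \<inter> Qs \<subseteq> Qs" by blast
    show "0 \<in> Qs" unfolding Qs_def by simp
    show "inj emb" unfolding emb_def inj_def using singleton_inj by blast
    show "range emb \<subseteq> Qs" unfolding emb_def Qs_def by blast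
    show "\<forall>p\<in>Qs. \<forall>q\<in>Qs. \<delta> p q \<in> Qs" using closed by simp
    show "{w. w \<noteq> [] \<and> f w \<in> F} \<subseteq> {w. w \<noteq> []}" by blast
    show "\<forall>w. w \<noteq> [] \<longrightarrow> (w \<in> {w. w \<noteq> [] \<and> f w \<in> F}) = oca_accepts \<delta> 0 emb (F \<inter> Qs) w"
      using run \<open>\<And>w. w \<noteq> [] \<Longrightarrow> f w \<in> Qs\<close> unfolding oca_accepts_def by simp
  qed
qed

lemma compositional_invariant_in_Trellis:
  fixes g :: "'s list \<Rightarrow> 'b" and P :: "'b \<Rightarrow> bool"
  assumes fin: "finite (g ` {w. w \<noteq> []})"
    and cong: "\<And>u v. 2 \<le> length u \<Longrightarrow> 2 \<le> length v \<Longrightarrow> g (butlast u) = g (butlast v)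
                 \<Longrightarrow> g (tl u) = g (tl v) \<Longrightarrow> g u = g v"
    and singleton_inj: "\<And>a b. g [a] = g [b] \<Longrightarrow> a = b"
  shows "{w. w \<noteq> [] \<and> P (g w)} \<in> Trellis"
proof -
  define G where "G = g ` {w. w \<noteq> []}"
  obtain enc :: "'b \<Rightarrow> nat" where inj: "inj_on enc G"
    using finite_imp_inj_to_nat_seg[OF fin] unfolding G_def by blast
  have enc_eq: "enc (g u) = enc (g v) \<longleftrightarrow> g u = g v" if "u \<noteq> []" "v \<noteq> []" for u v
    using inj_onD[OF inj, of "g u" "g v"] that unfolding G_def by auto
  have enc_cong: "enc (g u) = enc (g v)"
    if "2 \<le> length u" "2 \<le> length v" "enc (g (butlast u)) = enc (g (butlast v))"
      "enc (g (tl u)) = enc (g (tl v))" for u v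
  proof -
    have "butlast u \<noteq> []" "tl u \<noteq> []" "butlast v \<noteq> []" "tl v \<noteq> []"
      using that(1,2) by (cases u; cases v; auto)+
    then show ?thesis using cong[OF that(1,2)] enc_eq that(3,4) by simp
  qed
  have fin': "finite ((\<lambda>w. enc (g w)) ` {w. w \<noteq> []})"
    using finite_imageI[OF fin, of enc] by (simp add: image_image)
  have singleton_inj': "a = b" if "enc (g [a]) = enc (g [b])" for a b
    using that enc_eq singleton_inj by simp
  have accept: "enc (g w) \<in> enc ` {x \<in> G. P x} \<longleftrightarrow> P (g w)" if "w \<noteq> []" for w
  proof
    assume "enc (g w) \<in> enc ` {x \<in> G. P x}"
    then obtain x where x: "x \<in> G" "P x" "enc (g w) = enc x" by blast
    have "g w \<in> G" using that unfolding G_def by blast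
    then show "P (g w)" using inj_onD[OF inj x(3)] x(1,2) by simp
  qed (use that in \<open>auto simp: G_def\<close>)
  then have "{w. w \<noteq> [] \<and> P (g w)} = {w. w \<noteq> [] \<and> enc (g w) \<in> enc ` {x \<in> G. P x}}"
    by blast
  also have "\<dots> \<in> Trellis"
    by (rule compositional_code_in_Trellis[of "\<lambda>w. enc (g w)", OF fin' enc_cong singleton_inj'])
  finally show ?thesis .
qed

lemma hyp_holds_mono [mono]:
  "(\<And>a b c. I a b c \<longrightarrow> J a b c) \<Longrightarrow> hyp_holds w I x y h \<longrightarrow> hyp_holds w J x y h"
  by (cases h) auto

inductive derived :: "'s horn_formula \<Rightarrow> 's list \<Rightarrow> nat \<Rightarrow> nat \<Rightarrow> nat \<Rightarrow> bool" for \<Phi> w where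
  derivedI: "(hs, Some R) \<in> set \<Phi> \<Longrightarrow> 1 \<le> x \<Longrightarrow> x \<le> y \<Longrightarrow> y \<le> length w \<Longrightarrow>
    \<forall>h\<in>set hs. hyp_holds w (derived \<Phi> w) x y h \<Longrightarrow> derived \<Phi> w R x y"

definition bot_fires :: "'s horn_formula \<Rightarrow> 's list \<Rightarrow> nat \<Rightarrow> nat \<Rightarrow> bool" where
  "bot_fires \<Phi> w x y \<longleftrightarrow> (\<exists>hs. (hs, None) \<in> set \<Phi> \<and> 1 \<le> x \<and> x \<le> y \<and> y \<le> length w \<and>
      (\<forall>h\<in>set hs. hyp_holds w (derived \<Phi> w) x y h))"

lemma derived_bounds: "derived \<Phi> w R x y \<Longrightarrow> 1 \<le> x \<and> x \<le> y \<and> y \<le> length w"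
  by (erule derived.cases) auto

lemma derived_head: "derived \<Phi> w R x y \<Longrightarrow> \<exists>hs. (hs, Some R) \<in> set \<Phi>"
  by (erule derived.cases) auto

lemma bot_fires_bounds: "bot_fires \<Phi> w x y \<Longrightarrow> 1 \<le> x \<and> x \<le> y \<and> y \<le> length w"
  unfolding bot_fires_def by auto

lemma derived_in_model:
  assumes model: "\<forall>x\<in>{1..length w}. \<forall>y\<in>{1..length w}. \<forall>cl\<in>set \<Phi>. clause_holds w I x y cl"
    and "derived \<Phi> w R x y"
  shows "I R x y"
  using assms(2)
proof (induction rule: derived.induct)
  case (derivedI hs R x y)
  have "hyp_holds w I x y h" if "hyp_holds w (\<lambda>a b c. derived \<Phi> w a b c \<and> I a b c) x y h" for h
    by (rule hyp_holds_mono[rule_format, OF _ that]) simp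
  then have "\<forall>h\<in>set hs. hyp_holds w I x y h" using derivedI.IH by blast
  moreover have "clause_holds w I x y (hs, Some R)" using model derivedI.hyps(1-4) by simp
  ultimately show ?case using derivedI.hyps(3) unfolding clause_holds_def by simp
qed

lemma horn_sat_iff_no_bot_fires: "horn_sat \<Phi> w \<longleftrightarrow> \<not> (\<exists>x y. bot_fires \<Phi> w x y)"
proof
  assume "horn_sat \<Phi> w"
  then obtain I where model: "\<forall>x\<in>{1..length w}. \<forall>y\<in>{1..length w}. \<forall>cl\<in>set \<Phi>. clause_holds w I x y cl"
    by (auto simp: horn_sat_def)
  show "\<not> (\<exists>x y. bot_fires \<Phi> w x y)"
  proof
    assume "\<exists>x y. bot_fires \<Phi> w x y"
    then obtain x y hs where fires: "(hs, None) \<in> set \<Phi>" "1 \<le> x" "x \<le> y" "y \<le> length w"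
      "\<forall>h\<in>set hs. hyp_holds w (derived \<Phi> w) x y h" unfolding bot_fires_def by blast
    have "hyp_holds w I x y h" if "hyp_holds w (derived \<Phi> w) x y h" for h
      by (rule hyp_holds_mono[rule_format, OF _ that]) (simp add: derived_in_model[OF model])
    then have "\<forall>h\<in>set hs. hyp_holds w I x y h" using fires(5) by blast
    moreover have "clause_holds w I x y (hs, None)" using model fires(1-4) by simp
    ultimately show False using fires(3) unfolding clause_holds_def by simp
  qed
next
  assume no_fire: "\<not> (\<exists>x y. bot_fires \<Phi> w x y)"
  show "horn_sat \<Phi> w" unfolding horn_sat_def
  proof (intro exI ballI)
    fix x y cl assume x: "x \<in> {1..length w}" and y: "y \<in> {1..length w}" and cl: "cl \<in> set \<Phi>"
    obtain hs head where cl_eq: "cl = (hs, head)" by fastforce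
    show "clause_holds w (derived \<Phi> w) x y cl"
    proof (cases head)
      case None
      then show ?thesis using no_fire x y cl cl_eq unfolding clause_holds_def bot_fires_def by auto
    next
      case (Some R)
      then show ?thesis using x y cl cl_eq derivedI[of hs R \<Phi> x y w] unfolding clause_holds_def by auto
    qed
  qed
qed

lemma funpow_suc_w: "x \<le> n \<Longrightarrow> (suc_w n ^^ k) x = min (x + k) n"
  by (induction k) (auto simp: suc_w_def)

lemma funpow_pred_w: "1 \<le> x \<Longrightarrow> (pred_w ^^ k) x = max (x - k) 1"
  by (induction k) (auto simp: pred_w_def max_def)

lemma shift_eq: "1 \<le> x \<Longrightarrow> x \<le> n \<Longrightarrow>
  shift n x a = (if 0 \<le> a then min (x + nat a) n else max (x - nat (- a)) 1)"
  by (simp add: shift_def funpow_suc_w funpow_pred_w)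

lemma backw_eq: "1 \<le> y \<Longrightarrow> backw y b = max (y - b) 1"
  by (simp add: backw_def funpow_pred_w)

lemma shift_nat_bounds: "1 \<le> x \<Longrightarrow> x \<le> n \<Longrightarrow> x \<le> shift n x (int a) \<and> shift n x (int a) \<le> n"
  by (simp add: shift_eq)

lemma backw_bounds: "1 \<le> y \<Longrightarrow> 1 \<le> backw y b \<and> backw y b \<le> y"
  by (simp add: backw_eq)

fun hyp_radius :: "'s hyp \<Rightarrow> nat" where
  "hyp_radius (UX U a p) = nat \<bar>a\<bar>"
| "hyp_radius (UY U a p) = nat \<bar>a\<bar>"
| "hyp_radius XeqY = 0"
| "hyp_radius XltY = 0"
| "hyp_radius (RelH S a b) = max a b"

definition radius :: "'s horn_formula \<Rightarrow> nat" where
  "radius \<Phi> = Max (insert 0 (hyp_radius ` (\<Union>cl\<in>set \<Phi>. set (fst cl))))"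

lemma hyp_radius_le_radius: "(hs, head) \<in> set \<Phi> \<Longrightarrow> h \<in> set hs \<Longrightarrow> hyp_radius h \<le> radius \<Phi>"
  unfolding radius_def by (rule Max_ge) force+

lemma hyp_holds_transfer:
  assumes radius: "hyp_radius h \<le> k"
    and x: "\<And>U a. \<bar>a\<bar> \<le> int k \<Longrightarrow>
        upred_holds w1 U (shift (length w1) x1 a) = upred_holds w2 U (shift (length w2) x2 a)"
    and y: "\<And>U a. \<bar>a\<bar> \<le> int k \<Longrightarrow>
        upred_holds w1 U (shift (length w1) y1 a) = upred_holds w2 U (shift (length w2) y2 a)"
    and less: "x1 < y1 \<longleftrightarrow> x2 < y2" and eq: "x1 = y1 \<longleftrightarrow> x2 = y2"
    and rel: "\<And>S a b. a \<le> k \<Longrightarrow> b \<le> k \<Longrightarrow> I1 S (shift (length w1) x1 (int a)) (backw y1 b) \<Longrightarrow>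
        shift (length w1) x1 (int a) \<le> backw y1 b \<Longrightarrow>
        I2 S (shift (length w2) x2 (int a)) (backw y2 b) \<and> shift (length w2) x2 (int a) \<le> backw y2 b"
    and holds: "hyp_holds w1 I1 x1 y1 h"
  shows "hyp_holds w2 I2 x2 y2 h"
proof (cases h)
  case (UX U a p)
  then show ?thesis using holds x[of a U] radius by simp
next
  case (UY U a p)
  then show ?thesis using holds y[of a U] radius by simp
next
  case (RelH S a b)
  then show ?thesis using holds rel[of a b S] radius by simp
qed (use holds less eq in simp_all)

text \<open>\<open>B\<close> relates intervals of \<open>w1\<close> to the intervals of \<open>w2\<close> at which the same atoms are
  to be derived.\<close>

lemma derived_transfer:
  assumes "derived \<Phi> w1 R x1 y1" and "B x1 y1 x2 y2"
    and step: "\<And>hs R x1 y1 x2 y2. (hs, Some R) \<in> set \<Phi> \<Longrightarrow> 1 \<le> x1 \<Longrightarrow> x1 \<le> y1 \<Longrightarrow>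
      y1 \<le> length w1 \<Longrightarrow> B x1 y1 x2 y2 \<Longrightarrow>
      \<forall>h\<in>set hs. hyp_holds w1 (\<lambda>S x y. derived \<Phi> w1 S x y \<and>
        (\<forall>x' y'. B x y x' y' \<longrightarrow> derived \<Phi> w2 S x' y')) x1 y1 h \<Longrightarrow>
      1 \<le> x2 \<and> x2 \<le> y2 \<and> y2 \<le> length w2 \<and> (\<forall>h\<in>set hs. hyp_holds w2 (derived \<Phi> w2) x2 y2 h)"
  shows "derived \<Phi> w2 R x2 y2"
  using assms(1,2)
proof (induction arbitrary: x2 y2 rule: derived.induct)
  case (derivedI hs R x y)
  have "1 \<le> x2 \<and> x2 \<le> y2 \<and> y2 \<le> length w2 \<and> (\<forall>h\<in>set hs. hyp_holds w2 (derived \<Phi> w2) x2 y2 h)"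
    by (rule step[OF derivedI.hyps(1-4) derivedI.prems]) (use derivedI.IH in simp)
  then show ?case using derivedI.hyps(1) derived.derivedI by blast
qed

lemma upred_holds_padded:
  assumes "1 \<le> j" "j \<le> length v" "p \<noteq> [] \<longrightarrow> 2 \<le> j" "q \<noteq> [] \<longrightarrow> j < length v"
  shows "upred_holds (p @ v @ q) U (j + length p) = upred_holds v U j"
proof (cases U)
  case (Q s)
  have e: "j + length p - 1 = length p + (j - 1)" using assms by simp
  have "(p @ v @ q) ! (length p + (j - 1)) = (v @ q) ! (j - 1)" by (rule nth_append_length_plus)
  also have "\<dots> = v ! (j - 1)"
  proof -
    have "j - 1 < length v" using assms by simp
    then show ?thesis by (simp add: nth_append)
  qed
  finally have "(p @ v @ q) ! (j + length p - 1) = v ! (j - 1)" unfolding e .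
  then show ?thesis using Q by simp
next
  case MinP then show ?thesis using assms by (cases p) auto
next
  case MaxP then show ?thesis using assms by (cases q) auto
qed

lemma shift_padded:
  assumes z: "1 \<le> z" "z \<le> length v" "p \<noteq> [] \<longrightarrow> k + 2 \<le> z" "q \<noteq> [] \<longrightarrow> z + k + 1 \<le> length v"
    and a: "\<bar>a\<bar> \<le> int k"
  shows "shift (length (p @ v @ q)) (z + length p) a = shift (length v) z a + length p \<and>
    1 \<le> shift (length v) z a \<and> shift (length v) z a \<le> length v \<and>
    (p \<noteq> [] \<longrightarrow> 2 \<le> shift (length v) z a) \<and> (q \<noteq> [] \<longrightarrow> shift (length v) z a < length v)"
proof -
  have s1: "shift (length (p @ v @ q)) (z + length p) a =
    (if 0 \<le> a then min (z + length p + nat a) (length p + length v + length q) else max (z + length p - nat (- a)) 1)"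
    using z by (subst shift_eq) auto
  have s2: "shift (length v) z a = (if 0 \<le> a then min (z + nat a) (length v) else max (z - nat (- a)) 1)"
    using z by (subst shift_eq) auto
  have na: "0 \<le> a \<Longrightarrow> nat a \<le> k" "a < 0 \<Longrightarrow> nat (- a) \<le> k" using a by auto
  show ?thesis
  proof (cases "0 \<le> a")
    case True
    then show ?thesis unfolding s1 s2 using na(1)[OF True] z by (cases "q = []"; cases "p = []"; simp)
  next
    case False
    then show ?thesis unfolding s1 s2 using na(2) z by (cases "q = []"; cases "p = []"; simp; arith)
  qed
qed

lemma upred_holds_padded_shift:
  assumes z: "1 \<le> z" "z \<le> length v" "p \<noteq> [] \<longrightarrow> k + 2 \<le> z" "q \<noteq> [] \<longrightarrow> z + k + 1 \<le> length v"
    and a: "\<bar>a\<bar> \<le> int k"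
  shows "upred_holds (p @ v @ q) U (shift (length (p @ v @ q)) (z + length p) a) =
    upred_holds v U (shift (length v) z a)"
  using shift_padded[OF z a] upred_holds_padded[of "shift (length v) z a" v p q U] by simp

lemma backw_padded:
  assumes "1 \<le> y" "p \<noteq> [] \<longrightarrow> k + 2 \<le> y" "b \<le> k"
  shows "backw (y + length p) b = backw y b + length p"
  using assms by (cases "p = []") (auto simp: backw_eq)

text \<open>\<open>[x, y]\<close> is an interval of \<open>v\<close> that a hypothesis of radius \<open>k\<close> cannot see past into a
  nonempty padding \<open>p\<close> or \<open>q\<close>, neither through a letter nor through \<open>min\<close>/\<open>max\<close>.\<close>

definition interior :: "nat \<Rightarrow> 's list \<Rightarrow> 's list \<Rightarrow> 's list \<Rightarrow> nat \<Rightarrow> nat \<Rightarrow> bool" where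
  "interior k p q v x y = (1 \<le> x \<and> x \<le> y \<and> y \<le> length v \<and> (p = [] \<or> k + 1 < x) \<and> (q = [] \<or> y + k + 1 \<le> length v))"

lemma interior_coords:
  assumes inner: "interior k p q v x y"
  shows "\<And>U a. \<bar>a\<bar> \<le> int k \<Longrightarrow> upred_holds (p @ v @ q) U (shift (length (p @ v @ q)) (x + length p) a)
            = upred_holds v U (shift (length v) x a)"
    and "\<And>U a. \<bar>a\<bar> \<le> int k \<Longrightarrow> upred_holds (p @ v @ q) U (shift (length (p @ v @ q)) (y + length p) a)
            = upred_holds v U (shift (length v) y a)"
    and "\<And>a. a \<le> k \<Longrightarrow> shift (length (p @ v @ q)) (x + length p) (int a) = shift (length v) x (int a) + length p"
    and "\<And>b. b \<le> k \<Longrightarrow> backw (y + length p) b = backw y b + length p"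
    and "\<And>a b. interior k p q v (shift (length v) x (int a)) (backw y b) \<longleftrightarrow> shift (length v) x (int a) \<le> backw y b"
proof -
  have zx: "1 \<le> x" "x \<le> length v" "p \<noteq> [] \<longrightarrow> k + 2 \<le> x" "q \<noteq> [] \<longrightarrow> x + k + 1 \<le> length v"
    using inner unfolding interior_def by auto
  have zy: "1 \<le> y" "y \<le> length v" "p \<noteq> [] \<longrightarrow> k + 2 \<le> y" "q \<noteq> [] \<longrightarrow> y + k + 1 \<le> length v"
    using inner unfolding interior_def by auto
  show "\<And>U a. \<bar>a\<bar> \<le> int k \<Longrightarrow> upred_holds (p @ v @ q) U (shift (length (p @ v @ q)) (x + length p) a)
            = upred_holds v U (shift (length v) x a)"
    using upred_holds_padded_shift[OF zx] by blast
  show "\<And>U a. \<bar>a\<bar> \<le> int k \<Longrightarrow> upred_holds (p @ v @ q) U (shift (length (p @ v @ q)) (y + length p) a)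
            = upred_holds v U (shift (length v) y a)"
    using upred_holds_padded_shift[OF zy] by blast
  show "\<And>a. a \<le> k \<Longrightarrow> shift (length (p @ v @ q)) (x + length p) (int a) = shift (length v) x (int a) + length p"
    using shift_padded[OF zx] by simp
  show "\<And>b. b \<le> k \<Longrightarrow> backw (y + length p) b = backw y b + length p"
    using backw_padded zy by blast
  show "\<And>a b. interior k p q v (shift (length v) x (int a)) (backw y b) \<longleftrightarrow> shift (length v) x (int a) \<le> backw y b"
  proof -
    fix a b
    have "x \<le> shift (length v) x (int a)" using shift_nat_bounds zx by blast
    moreover have "backw y b \<le> y" using backw_bounds zy by blast
    ultimately show "interior k p q v (shift (length v) x (int a)) (backw y b) \<longleftrightarrow> shift (length v) x (int a) \<le> backw y b"
      using inner unfolding interior_def by auto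
  qed
qed

lemma hyp_holds_unpad:
  assumes inner: "interior k p q v x y" and radius_h: "hyp_radius h \<le> k"
    and atoms: "\<And>S x' y'. interior k p q v x' y' \<Longrightarrow> I1 S (x' + length p) (y' + length p) \<Longrightarrow> I2 S x' y'"
    and holds: "hyp_holds (p @ v @ q) I1 (x + length p) (y + length p) h"
  shows "hyp_holds v I2 x y h"
proof (rule hyp_holds_transfer[OF radius_h _ _ _ _ _ holds])
  show "\<And>U a. \<bar>a\<bar> \<le> int k \<Longrightarrow> upred_holds (p @ v @ q) U (shift (length (p @ v @ q)) (x + length p) a)
            = upred_holds v U (shift (length v) x a)" by (rule interior_coords(1)[OF inner])
  show "\<And>U a. \<bar>a\<bar> \<le> int k \<Longrightarrow> upred_holds (p @ v @ q) U (shift (length (p @ v @ q)) (y + length p) a)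
            = upred_holds v U (shift (length v) y a)" by (rule interior_coords(2)[OF inner])
  show "(x + length p < y + length p) = (x < y)" by simp
  show "(x + length p = y + length p) = (x = y)" by simp
  fix S a b assume ab: "a \<le> k" "b \<le> k"
    and rel: "I1 S (shift (length (p @ v @ q)) (x + length p) (int a)) (backw (y + length p) b)"
    and le: "shift (length (p @ v @ q)) (x + length p) (int a) \<le> backw (y + length p) b"
  note coords = interior_coords(3)[OF inner ab(1)] interior_coords(4)[OF inner ab(2)]
  have le': "shift (length v) x (int a) \<le> backw y b" using le unfolding coords by simp
  then have "interior k p q v (shift (length v) x (int a)) (backw y b)" using interior_coords(5)[OF inner] by blast
  then show "I2 S (shift (length v) x (int a)) (backw y b) \<and> shift (length v) x (int a) \<le> backw y b"
    using atoms rel le' unfolding coords by blast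
qed

lemma hyp_holds_pad:
  assumes inner: "interior k p q v x y" and radius_h: "hyp_radius h \<le> k"
    and atoms: "\<And>S x' y'. interior k p q v x' y' \<Longrightarrow> I2 S x' y' \<Longrightarrow> I1 S (x' + length p) (y' + length p)"
    and holds: "hyp_holds v I2 x y h"
  shows "hyp_holds (p @ v @ q) I1 (x + length p) (y + length p) h"
proof (rule hyp_holds_transfer[OF radius_h _ _ _ _ _ holds])
  show "\<And>U a. \<bar>a\<bar> \<le> int k \<Longrightarrow> upred_holds v U (shift (length v) x a) =
     upred_holds (p @ v @ q) U (shift (length (p @ v @ q)) (x + length p) a)"
    using interior_coords(1)[OF inner] by simp
  show "\<And>U a. \<bar>a\<bar> \<le> int k \<Longrightarrow> upred_holds v U (shift (length v) y a) =
     upred_holds (p @ v @ q) U (shift (length (p @ v @ q)) (y + length p) a)"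
    using interior_coords(2)[OF inner] by simp
  show "(x < y) = (x + length p < y + length p)" by simp
  show "(x = y) = (x + length p = y + length p)" by simp
  fix S a b assume ab: "a \<le> k" "b \<le> k"
    and rel: "I2 S (shift (length v) x (int a)) (backw y b)"
    and le: "shift (length v) x (int a) \<le> backw y b"
  note coords = interior_coords(3)[OF inner ab(1)] interior_coords(4)[OF inner ab(2)]
  have "interior k p q v (shift (length v) x (int a)) (backw y b)" using interior_coords(5)[OF inner] le by blast
  then show "I1 S (shift (length (p @ v @ q)) (x + length p) (int a)) (backw (y + length p) b) \<and>
    shift (length (p @ v @ q)) (x + length p) (int a) \<le> backw (y + length p) b"
    using atoms rel le unfolding coords by simp
qed

lemma derived_unpad:
  assumes inner: "interior (radius \<Phi>) p q v x y" and der: "derived \<Phi> (p @ v @ q) R (x + length p) (y + length p)"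
  shows "derived \<Phi> v R x y"
proof -
  define B where "B = (\<lambda>x1 y1 x2 y2. x1 = x2 + length p \<and> y1 = y2 + length p \<and> interior (radius \<Phi>) p q v x2 y2)"
  have b: "B (x + length p) (y + length p) x y" using inner unfolding B_def by simp
  have step: "1 \<le> x2 \<and> x2 \<le> y2 \<and> y2 \<le> length v \<and> (\<forall>h\<in>set hs. hyp_holds v (derived \<Phi> v) x2 y2 h)"
    if cl: "(hs, Some R) \<in> set \<Phi>" and bb: "B x1 y1 x2 y2"
      and holds: "\<forall>h\<in>set hs. hyp_holds (p @ v @ q) (\<lambda>S x y. derived \<Phi> (p @ v @ q) S x y \<and>
          (\<forall>x' y'. B x y x' y' \<longrightarrow> derived \<Phi> v S x' y')) x1 y1 h" for hs R x1 y1 x2 y2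
  proof -
    have inner2: "interior (radius \<Phi>) p q v x2 y2" and e: "x1 = x2 + length p" "y1 = y2 + length p" using bb unfolding B_def by auto
    have "hyp_holds v (derived \<Phi> v) x2 y2 h" if h: "h \<in> set hs" for h
    proof (rule hyp_holds_unpad[OF inner2 hyp_radius_le_radius[OF cl h]])
      show "hyp_holds (p @ v @ q) (\<lambda>S x y. derived \<Phi> (p @ v @ q) S x y \<and>
          (\<forall>x' y'. B x y x' y' \<longrightarrow> derived \<Phi> v S x' y')) (x2 + length p) (y2 + length p) h"
        using holds h e by simp
      show "\<And>S x' y'. interior (radius \<Phi>) p q v x' y' \<Longrightarrow> derived \<Phi> (p @ v @ q) S (x' + length p) (y' + length p) \<and>
          (\<forall>x'a y'a. B (x' + length p) (y' + length p) x'a y'a \<longrightarrow> derived \<Phi> v S x'a y'a) \<Longrightarrow> derived \<Phi> v S x' y'"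
        unfolding B_def by auto
    qed
    then show ?thesis using inner2 unfolding interior_def by auto
  qed
  show ?thesis by (rule derived_transfer[where B = B, OF der b step]) 
qed


lemma derived_pad:
  assumes inner: "interior (radius \<Phi>) p q v x y" and der: "derived \<Phi> v R x y"
  shows "derived \<Phi> (p @ v @ q) R (x + length p) (y + length p)"
proof -
  define B where "B = (\<lambda>x1 y1 x2 y2. x2 = x1 + length p \<and> y2 = y1 + length p \<and> interior (radius \<Phi>) p q v x1 y1)"
  have b: "B x y (x + length p) (y + length p)" using inner unfolding B_def by simp
  have step: "1 \<le> x2 \<and> x2 \<le> y2 \<and> y2 \<le> length (p @ v @ q) \<and>
      (\<forall>h\<in>set hs. hyp_holds (p @ v @ q) (derived \<Phi> (p @ v @ q)) x2 y2 h)"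
    if cl: "(hs, Some R) \<in> set \<Phi>" and bb: "B x1 y1 x2 y2"
      and holds: "\<forall>h\<in>set hs. hyp_holds v (\<lambda>S x y. derived \<Phi> v S x y \<and>
          (\<forall>x' y'. B x y x' y' \<longrightarrow> derived \<Phi> (p @ v @ q) S x' y')) x1 y1 h" for hs R x1 y1 x2 y2
  proof -
    have inner1: "interior (radius \<Phi>) p q v x1 y1" and e: "x2 = x1 + length p" "y2 = y1 + length p"
      using bb unfolding B_def by auto
    have "hyp_holds (p @ v @ q) (derived \<Phi> (p @ v @ q)) (x1 + length p) (y1 + length p) h" if h: "h \<in> set hs" for h
    proof (rule hyp_holds_pad[OF inner1 hyp_radius_le_radius[OF cl h]])
      show "hyp_holds v (\<lambda>S x y. derived \<Phi> v S x y \<and>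
          (\<forall>x' y'. B x y x' y' \<longrightarrow> derived \<Phi> (p @ v @ q) S x' y')) x1 y1 h"
        using holds h by simp
      show "\<And>S x' y'. interior (radius \<Phi>) p q v x' y' \<Longrightarrow> derived \<Phi> v S x' y' \<and>
          (\<forall>x'a y'a. B x' y' x'a y'a \<longrightarrow> derived \<Phi> (p @ v @ q) S x'a y'a) \<Longrightarrow>
          derived \<Phi> (p @ v @ q) S (x' + length p) (y' + length p)"
        unfolding B_def by auto
    qed
    then show ?thesis using inner1 e unfolding interior_def by auto
  qed
  show ?thesis by (rule derived_transfer[where B = B, OF der b step])
qed

lemma derived_padded_iff:
  assumes inner: "interior (radius \<Phi>) p q v x y"
  shows "derived \<Phi> (p @ v @ q) R (x + length p) (y + length p) \<longleftrightarrow> derived \<Phi> v R x y"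
  using derived_unpad[OF inner] derived_pad[OF inner] by blast

lemma bot_fires_padded_iff:
  assumes inner: "interior (radius \<Phi>) p q v x y"
  shows "bot_fires \<Phi> (p @ v @ q) (x + length p) (y + length p) \<longleftrightarrow> bot_fires \<Phi> v x y"
proof -
  have unpad: "\<And>S x' y'. interior (radius \<Phi>) p q v x' y' \<Longrightarrow> derived \<Phi> (p @ v @ q) S (x' + length p) (y' + length p) \<Longrightarrow> derived \<Phi> v S x' y'"
    using derived_unpad by blast
  have pad: "\<And>S x' y'. interior (radius \<Phi>) p q v x' y' \<Longrightarrow> derived \<Phi> v S x' y' \<Longrightarrow> derived \<Phi> (p @ v @ q) S (x' + length p) (y' + length p)"
    using derived_pad by blast
  have bounds: "1 \<le> x + length p \<and> x + length p \<le> y + length p \<and> y + length p \<le> length (p @ v @ q)"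
    "1 \<le> x \<and> x \<le> y \<and> y \<le> length v" using inner unfolding interior_def by auto
  show ?thesis
  proof
    assume "bot_fires \<Phi> (p @ v @ q) (x + length p) (y + length p)"
    then obtain hs where cl: "(hs, None) \<in> set \<Phi>"
      and holds: "\<forall>h\<in>set hs. hyp_holds (p @ v @ q) (derived \<Phi> (p @ v @ q)) (x + length p) (y + length p) h"
      unfolding bot_fires_def by blast
    have "hyp_holds v (derived \<Phi> v) x y h" if h: "h \<in> set hs" for h
      using hyp_holds_unpad[of "radius \<Phi>" p q v x y h "derived \<Phi> (p @ v @ q)" "derived \<Phi> v"] inner hyp_radius_le_radius[OF cl h] unpad bspec[OF holds h] by blast
    then show "bot_fires \<Phi> v x y" unfolding bot_fires_def using cl bounds by blast
  next
    assume "bot_fires \<Phi> v x y"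
    then obtain hs where cl: "(hs, None) \<in> set \<Phi>"
      and holds: "\<forall>h\<in>set hs. hyp_holds v (derived \<Phi> v) x y h"
      unfolding bot_fires_def by blast
    have "hyp_holds (p @ v @ q) (derived \<Phi> (p @ v @ q)) (x + length p) (y + length p) h" if h: "h \<in> set hs" for h
      using hyp_holds_pad[of "radius \<Phi>" p q v x y h "derived \<Phi> v" "derived \<Phi> (p @ v @ q)"] inner hyp_radius_le_radius[OF cl h] pad bspec[OF holds h] by blast
    then show "bot_fires \<Phi> (p @ v @ q) (x + length p) (y + length p)" unfolding bot_fires_def using cl bounds by blast
  qed
qed

lemma upred_holds_cong:
  assumes "j = 1 \<longleftrightarrow> j' = 1" "j = length w \<longleftrightarrow> j' = length w'" "w ! (j - 1) = w' ! (j' - 1)"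
  shows "upred_holds w U j = upred_holds w' U j'"
  using assms by (cases U) auto

lemma nth_append3_middle: "length l \<le> m \<Longrightarrow> m < length l + length u \<Longrightarrow> (l @ u @ r) ! m = u ! (m - length l)"
  by (simp add: nth_append_right nth_append_left)

lemma nth_append3_right: "length l + length u \<le> m \<Longrightarrow> (l @ u @ r) ! m = r ! (m - length l - length u)"
  by (simp add: nth_append_right)

lemma shift_left_end: "a < length u \<Longrightarrow> shift (length (l @ u @ r)) (length l + 1) (int a) = length l + 1 + a"
  by (subst shift_eq) auto

lemma backw_right_end: "b < length u \<Longrightarrow> backw (length l + length u) b = length l + length u - b"
  by (subst backw_eq) auto

lemma upred_holds_left_end:
  assumes lu: "k + 2 \<le> length u" and lv: "k + 2 \<le> length v"
    and tu: "take (k + 1) u = take (k + 1) v" and a: "\<bar>a\<bar> \<le> int k"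
  shows "upred_holds (l @ u @ r) U (shift (length (l @ u @ r)) (length l + 1) a) =
    upred_holds (l @ v @ r) U (shift (length (l @ v @ r)) (length l + 1) a)"
proof (cases "0 \<le> a")
  case True
  have na: "nat a \<le> k" using a True by auto
  then have same_letter: "u ! nat a = v ! nat a" using tu lu lv by (metis le_imp_less_Suc nth_take Suc_eq_plus1)
  have shift: "shift (length (l @ w @ r)) (length l + 1) a = length l + 1 + nat a"
    if "k + 2 \<le> length w" for w
    using that True shift_left_end[of "nat a" w l r] na by simp
  have "(l @ u @ r) ! (length l + 1 + nat a - 1) = (l @ v @ r) ! (length l + 1 + nat a - 1)"
    using na lu lv same_letter by (simp add: nth_append3_middle nth_append_left)
  then show ?thesis using na lu lv unfolding shift[OF lu] shift[OF lv]
    by (intro upred_holds_cong) auto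
next
  case False
  define e where "e = nat (- a)"
  have e: "e \<le> k" "0 < e" using a False unfolding e_def by auto
  have shift: "shift (length (l @ w @ r)) (length l + 1) a = max (length l + 1 - e) 1" if "w \<noteq> []" for w
    using that False unfolding e_def by (subst shift_eq) (auto simp: Suc_le_eq)
  have "(l @ u @ r) ! (max (length l + 1 - e) 1 - 1) = (l @ v @ r) ! (max (length l + 1 - e) 1 - 1)"
  proof (cases "l = []")
    case True
    then show ?thesis using tu lu lv by (cases u; cases v) auto
  next
    case False
    then show ?thesis using e by (simp add: nth_append max_def)
  qed
  moreover have "u \<noteq> []" "v \<noteq> []" using lu lv by auto
  ultimately show ?thesis using lu lv e unfolding shift[OF \<open>u \<noteq> []\<close>] shift[OF \<open>v \<noteq> []\<close>]
    by (intro upred_holds_cong) (auto simp: max_def)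
qed

lemma upred_holds_right_end:
  assumes lu: "k + 2 \<le> length u" and lv: "k + 2 \<le> length v"
    and tr: "take (k + 1) (rev u) = take (k + 1) (rev v)" and a: "\<bar>a\<bar> \<le> int k"
  shows "upred_holds (l @ u @ r) U (shift (length (l @ u @ r)) (length l + length u) a) =
    upred_holds (l @ v @ r) U (shift (length (l @ v @ r)) (length l + length v) a)"
proof (cases "0 \<le> a")
  case True
  define d where "d = min (nat a) (length r)"
  have shift: "shift (length (l @ w @ r)) (length l + length w) a = length l + length w + d"
    if "w \<noteq> []" for w
    using that True unfolding d_def by (subst shift_eq) (auto simp: Suc_le_eq)
  have "(l @ u @ r) ! (length l + length u + d - 1) = (l @ v @ r) ! (length l + length v + d - 1)"
  proof (cases "d = 0")
    case True
    have nth_last: "(l @ w @ r) ! (length l + length w - 1) = rev w ! 0" if "w \<noteq> []" for w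
    proof -
      have "length l \<le> length l + length w - 1" "length l + length w - 1 < length l + length w"
        using that by (cases w; simp)+
      then show ?thesis using that by (simp add: nth_append3_middle rev_nth)
    qed
    have "rev u ! 0 = rev v ! 0" using tr by (metis nth_take zero_less_Suc Suc_eq_plus1)
    moreover have "u \<noteq> []" "v \<noteq> []" using lu lv by auto
    ultimately show ?thesis using True nth_last by simp
  next
    case False
    then show ?thesis by (simp add: nth_append3_right)
  qed
  moreover have "u \<noteq> []" "v \<noteq> []" using lu lv by auto
  ultimately show ?thesis using lu lv unfolding shift[OF \<open>u \<noteq> []\<close>] shift[OF \<open>v \<noteq> []\<close>]
    by (intro upred_holds_cong) auto
next
  case False
  define e where "e = nat (- a)"
  have e: "e \<le> k" "0 < e" using a False unfolding e_def by auto
  have shift: "shift (length (l @ w @ r)) (length l + length w) a = length l + length w - e"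
    if "k + 2 \<le> length w" for w
    using that False e unfolding e_def by (subst shift_eq) auto
  have "rev u ! e = rev v ! e" using tr e by (metis le_imp_less_Suc nth_take Suc_eq_plus1)
  then have "(l @ u @ r) ! (length l + length u - e - 1) = (l @ v @ r) ! (length l + length v - e - 1)"
    using lu lv e by (simp add: nth_append3_middle rev_nth)
  then show ?thesis using lu lv e unfolding shift[OF lu] shift[OF lv]
    by (intro upred_holds_cong) auto
qed

text \<open>The bound \<open>2k + 2\<close> keeps the radius-\<open>k\<close> neighbourhoods of both ends of \<open>u\<close> inside
  the common prefix and suffix, so that \<open>u\<close> and \<open>v\<close> look alike from either end.\<close>

lemma hyp_holds_whole_transfer:
  assumes lu: "2 * k + 2 \<le> length u" and lv: "2 * k + 2 \<le> length v"
    and tu: "take (2 * k + 2) u = take (2 * k + 2) v"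
    and tr: "take (2 * k + 2) (rev u) = take (2 * k + 2) (rev v)"
    and radius: "hyp_radius h \<le> k"
    and rel: "\<And>S a b. a \<le> k \<Longrightarrow> b \<le> k \<Longrightarrow> I1 S (length l + 1 + a) (length l + length u - b) \<Longrightarrow>
       I2 S (length l + 1 + a) (length l + length v - b)"
    and holds: "hyp_holds (l @ u @ r) I1 (length l + 1) (length l + length u) h"
  shows "hyp_holds (l @ v @ r) I2 (length l + 1) (length l + length v) h"
proof (rule hyp_holds_transfer[OF radius _ _ _ _ _ holds])
  have lu': "k + 2 \<le> length u" and lv': "k + 2 \<le> length v" using lu lv by auto
  have "take (k + 1) (take (2 * k + 2) xs) = take (k + 1) xs" for xs :: "'a list" by simp
  then have tu': "take (k + 1) u = take (k + 1) v" and tr': "take (k + 1) (rev u) = take (k + 1) (rev v)"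
    using tu tr by metis+
  show "\<And>U a. \<bar>a\<bar> \<le> int k \<Longrightarrow>
     upred_holds (l @ u @ r) U (shift (length (l @ u @ r)) (length l + 1) a) =
     upred_holds (l @ v @ r) U (shift (length (l @ v @ r)) (length l + 1) a)"
    by (rule upred_holds_left_end[OF lu' lv' tu'])
  show "\<And>U a. \<bar>a\<bar> \<le> int k \<Longrightarrow>
     upred_holds (l @ u @ r) U (shift (length (l @ u @ r)) (length l + length u) a) =
     upred_holds (l @ v @ r) U (shift (length (l @ v @ r)) (length l + length v) a)"
    by (rule upred_holds_right_end[OF lu' lv' tr'])
  show "(length l + 1 < length l + length u) = (length l + 1 < length l + length v)"
    "(length l + 1 = length l + length u) = (length l + 1 = length l + length v)"
    using lu lv by simp_all
  fix S a b assume ab: "a \<le> k" "b \<le> k"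
    and "I1 S (shift (length (l @ u @ r)) (length l + 1) (int a)) (backw (length l + length u) b)"
  then have "I2 S (length l + 1 + a) (length l + length v - b)"
    using rel shift_left_end[of a u l r] backw_right_end[of b u l] lu by simp
  then show "I2 S (shift (length (l @ v @ r)) (length l + 1) (int a)) (backw (length l + length v) b) \<and>
     shift (length (l @ v @ r)) (length l + 1) (int a) \<le> backw (length l + length v) b"
    using shift_left_end[of a v l r] backw_right_end[of b v l] ab lv by simp
qed

lemma derived_whole_transfer:
  assumes lu: "2 * radius \<Phi> + 2 \<le> length u" and lv: "2 * radius \<Phi> + 2 \<le> length v"
    and tu: "take (2 * radius \<Phi> + 2) u = take (2 * radius \<Phi> + 2) v"
    and tr: "take (2 * radius \<Phi> + 2) (rev u) = take (2 * radius \<Phi> + 2) (rev v)"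
    and off_corner: "\<And>S a b. a \<le> radius \<Phi> \<Longrightarrow> b \<le> radius \<Phi> \<Longrightarrow> (a, b) \<noteq> (0, 0) \<Longrightarrow>
       derived \<Phi> (l @ u @ r) S (length l + 1 + a) (length l + length u - b) \<Longrightarrow>
       derived \<Phi> (l @ v @ r) S (length l + 1 + a) (length l + length v - b)"
    and "derived \<Phi> (l @ u @ r) R (length l + 1) (length l + length u)"
  shows "derived \<Phi> (l @ v @ r) R (length l + 1) (length l + length v)"
proof -
  define B where "B x1 y1 x2 y2 \<longleftrightarrow> x1 = length l + 1 \<and> y1 = length l + length u \<and>
      x2 = length l + 1 \<and> y2 = length l + length v" for x1 y1 x2 y2
  have step: "1 \<le> x2 \<and> x2 \<le> y2 \<and> y2 \<le> length (l @ v @ r) \<and>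
      (\<forall>h\<in>set hs. hyp_holds (l @ v @ r) (derived \<Phi> (l @ v @ r)) x2 y2 h)"
    if cl: "(hs, Some R) \<in> set \<Phi>" and "B x1 y1 x2 y2"
      and holds: "\<forall>h\<in>set hs. hyp_holds (l @ u @ r) (\<lambda>S x y. derived \<Phi> (l @ u @ r) S x y \<and>
          (\<forall>x' y'. B x y x' y' \<longrightarrow> derived \<Phi> (l @ v @ r) S x' y')) x1 y1 h" for hs R x1 y1 x2 y2
  proof -
    have xy: "x1 = length l + 1" "y1 = length l + length u" "x2 = length l + 1" "y2 = length l + length v"
      using \<open>B x1 y1 x2 y2\<close> unfolding B_def by auto
    have "hyp_holds (l @ v @ r) (derived \<Phi> (l @ v @ r)) x2 y2 h" if h: "h \<in> set hs" for h
      unfolding xy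
    proof (rule hyp_holds_whole_transfer[OF lu lv tu tr hyp_radius_le_radius[OF cl h]])
      show "hyp_holds (l @ u @ r) (\<lambda>S x y. derived \<Phi> (l @ u @ r) S x y \<and>
          (\<forall>x' y'. B x y x' y' \<longrightarrow> derived \<Phi> (l @ v @ r) S x' y')) (length l + 1) (length l + length u) h"
        using holds h xy by simp
      fix S a b assume ab: "a \<le> radius \<Phi>" "b \<le> radius \<Phi>"
        and derived_u: "derived \<Phi> (l @ u @ r) S (length l + 1 + a) (length l + length u - b) \<and>
          (\<forall>x' y'. B (length l + 1 + a) (length l + length u - b) x' y' \<longrightarrow> derived \<Phi> (l @ v @ r) S x' y')"
      show "derived \<Phi> (l @ v @ r) S (length l + 1 + a) (length l + length v - b)"
      proof (cases "(a, b) = (0, 0)")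
        case True
        then show ?thesis using derived_u unfolding B_def by simp
      qed (use off_corner[OF ab] derived_u in blast)
    qed
    then show ?thesis using xy lv by auto
  qed
  show ?thesis by (rule derived_transfer[where B = B, OF assms(6) _ step]) (simp add: B_def)
qed

lemma bot_fires_whole_transfer:
  assumes lu: "2 * radius \<Phi> + 2 \<le> length u" and lv: "2 * radius \<Phi> + 2 \<le> length v"
    and tu: "take (2 * radius \<Phi> + 2) u = take (2 * radius \<Phi> + 2) v"
    and tr: "take (2 * radius \<Phi> + 2) (rev u) = take (2 * radius \<Phi> + 2) (rev v)"
    and atoms: "\<And>S a b. a \<le> radius \<Phi> \<Longrightarrow> b \<le> radius \<Phi> \<Longrightarrow>
       derived \<Phi> (l @ u @ r) S (length l + 1 + a) (length l + length u - b) \<Longrightarrow>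
       derived \<Phi> (l @ v @ r) S (length l + 1 + a) (length l + length v - b)"
    and "bot_fires \<Phi> (l @ u @ r) (length l + 1) (length l + length u)"
  shows "bot_fires \<Phi> (l @ v @ r) (length l + 1) (length l + length v)"
proof -
  obtain hs where cl: "(hs, None) \<in> set \<Phi>"
      and holds: "\<forall>h\<in>set hs. hyp_holds (l @ u @ r) (derived \<Phi> (l @ u @ r)) (length l + 1) (length l + length u) h"
    using assms(6) unfolding bot_fires_def by blast
  have "hyp_holds (l @ v @ r) (derived \<Phi> (l @ v @ r)) (length l + 1) (length l + length v) h"
    if "h \<in> set hs" for h
  proof (rule hyp_holds_whole_transfer[OF lu lv tu tr hyp_radius_le_radius[OF cl that]])
    show "hyp_holds (l @ u @ r) (derived \<Phi> (l @ u @ r)) (length l + 1) (length l + length u) h"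
      using holds that by blast
  qed (rule atoms)
  then show ?thesis unfolding bot_fires_def using cl lv by auto
qed

lemma restrict_butlast:
  fixes \<Phi> :: "'s horn_formula"
  assumes u: "2 \<le> length u" and xy: "1 \<le> x" "x \<le> y" "y \<le> length l + length u - 1"
  shows "derived \<Phi> (l@u@r) R x y \<longleftrightarrow> derived \<Phi> (l @ butlast u @ take (radius \<Phi> + 1) (last u # r)) R x y"
    and "bot_fires \<Phi> (l@u@r) x y \<longleftrightarrow> bot_fires \<Phi> (l @ butlast u @ take (radius \<Phi> + 1) (last u # r)) x y"
proof -
  define r' where "r' = take (radius \<Phi> + 1) (last u # r)"
  define q where "q = drop (radius \<Phi> + 1) (last u # r)"
  define v where "v = l @ butlast u @ r'"
  have u_ne: "u \<noteq> []" using u by auto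
  have parts: "l @ u @ r = [] @ v @ q"
  proof -
    have "l @ u @ r = l @ butlast u @ (last u # r)"
      using append_butlast_last_id[OF u_ne] by (metis append.assoc append_Cons append_Nil)
    also have "\<dots> = l @ butlast u @ r' @ q" unfolding r'_def q_def by simp
    finally show ?thesis unfolding v_def by simp
  qed
  have inner: "interior (radius \<Phi>) [] q v x y"
  proof -
    have "q \<noteq> [] \<Longrightarrow> length r' = radius \<Phi> + 1" unfolding q_def r'_def by auto
    then show ?thesis unfolding interior_def v_def using xy u_ne by (cases "q = []") auto
  qed
  show "derived \<Phi> (l@u@r) R x y \<longleftrightarrow> derived \<Phi> (l @ butlast u @ take (radius \<Phi> + 1) (last u # r)) R x y"
    using derived_padded_iff[OF inner, of R] unfolding parts by (simp add: v_def r'_def)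
  show "bot_fires \<Phi> (l@u@r) x y \<longleftrightarrow> bot_fires \<Phi> (l @ butlast u @ take (radius \<Phi> + 1) (last u # r)) x y"
    using bot_fires_padded_iff[OF inner] unfolding parts by (simp add: v_def r'_def)
qed

lemma restrict_tl:
  fixes \<Phi> :: "'s horn_formula" and l u r :: "'s list"
  defines "m \<equiv> length l + 1 - (radius \<Phi> + 1)"
  assumes u: "2 \<le> length u" and l: "length l \<le> radius \<Phi> + 1"
    and xy: "length l + 2 \<le> x" "x \<le> y" "y \<le> length l + length u + length r"
  shows "derived \<Phi> (l@u@r) R x y \<longleftrightarrow> derived \<Phi> (drop m (l @ [hd u]) @ tl u @ r) R (x - m) (y - m)"
    and "bot_fires \<Phi> (l@u@r) x y \<longleftrightarrow> bot_fires \<Phi> (drop m (l @ [hd u]) @ tl u @ r) (x - m) (y - m)"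
proof -
  define p where "p = take m (l @ [hd u])"
  define v where "v = drop m (l @ [hd u]) @ tl u @ r"
  have u_ne: "u \<noteq> []" using u by auto
  have len_p: "length p = m" unfolding p_def m_def by simp
  have parts: "l @ u @ r = p @ v @ []"
  proof -
    have "l @ u @ r = (l @ [hd u]) @ tl u @ r" using u_ne by (cases u) auto
    also have "\<dots> = p @ v" unfolding p_def v_def by (metis append.assoc append_take_drop_id)
    finally show ?thesis by simp
  qed
  have shifted: "x = (x - m) + length p" "y = (y - m) + length p" using len_p xy unfolding m_def by auto
  have inner: "interior (radius \<Phi>) p [] v (x - m) (y - m)"
  proof -
    have "p \<noteq> [] \<Longrightarrow> m = 1 \<and> length l = radius \<Phi> + 1"
    proof -
      assume "p \<noteq> []"
      then have "0 < length p" by simp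
      then show ?thesis using len_p l unfolding m_def by simp
    qed
    moreover have "length v = length l + 1 - m + (length u - 1) + length r" unfolding v_def by simp
    ultimately show ?thesis unfolding interior_def using xy l unfolding m_def by (cases "p = []") auto
  qed
  show "derived \<Phi> (l@u@r) R x y \<longleftrightarrow> derived \<Phi> (drop m (l @ [hd u]) @ tl u @ r) R (x - m) (y - m)"
    using derived_padded_iff[OF inner, of R] unfolding parts v_def by (metis shifted)
  show "bot_fires \<Phi> (l@u@r) x y \<longleftrightarrow> bot_fires \<Phi> (drop m (l @ [hd u]) @ tl u @ r) (x - m) (y - m)"
    using bot_fires_padded_iff[OF inner] unfolding parts v_def by (metis shifted)
qed


definition end_atoms :: "'s horn_formula \<Rightarrow> 's list \<Rightarrow> 's list \<Rightarrow> 's list \<Rightarrow> (nat \<times> nat \<times> nat) set" where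
  "end_atoms \<Phi> l u r = {(R, a, b). a \<le> radius \<Phi> \<and> b \<le> radius \<Phi> \<and>
     derived \<Phi> (l @ u @ r) R (length l + 1 + a) (length l + length u - b)}"

definition fires_inside :: "'s horn_formula \<Rightarrow> 's list \<Rightarrow> 's list \<Rightarrow> 's list \<Rightarrow> bool" where
  "fires_inside \<Phi> l u r = (\<exists>x y. length l < x \<and> x \<le> y \<and> y \<le> length l + length u \<and> bot_fires \<Phi> (l @ u @ r) x y)"

lemma end_atoms_iff: "(S, a, b) \<in> end_atoms \<Phi> l u r \<longleftrightarrow> a \<le> radius \<Phi> \<and> b \<le> radius \<Phi> \<and>
     derived \<Phi> (l @ u @ r) S (length l + 1 + a) (length l + length u - b)"
  by (simp add: end_atoms_def)

lemma end_atoms_butlast: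
  fixes \<Phi> :: "'s horn_formula"
  assumes u: "2 \<le> length u" and b: "1 \<le> b" "b \<le> radius \<Phi>"
  shows "(S, a, b) \<in> end_atoms \<Phi> l u r \<longleftrightarrow> (S, a, b - 1) \<in> end_atoms \<Phi> l (butlast u) (take (radius \<Phi> + 1) (last u # r))"
proof -
  have y: "length l + length (butlast u) - (b - 1) = length l + length u - b" using u b by simp
  show ?thesis
  proof (cases "length l + 1 + a \<le> length l + length u - b")
    case True
    then show ?thesis unfolding end_atoms_iff y using restrict_butlast(1)[OF u, of "length l + 1 + a" "length l + length u - b" l \<Phi> r S] b
      by auto
  next
    case False
    then show ?thesis unfolding end_atoms_iff y using derived_bounds by fastforce
  qed
qed

lemma end_atoms_tl:
  fixes \<Phi> :: "'s horn_formula" and l u r :: "'s list"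
  defines "m \<equiv> length l + 1 - (radius \<Phi> + 1)"
  assumes u: "2 \<le> length u" and a: "1 \<le> a" "a \<le> radius \<Phi>" and l: "length l \<le> radius \<Phi> + 1"
  shows "(S, a, 0) \<in> end_atoms \<Phi> l u r \<longleftrightarrow> (S, a - 1, 0) \<in> end_atoms \<Phi> (drop m (l @ [hd u])) (tl u) r"
proof -
  have m: "m \<le> length l + 1" unfolding m_def by simp
  have x: "length (drop m (l @ [hd u])) + 1 + (a - 1) = length l + 1 + a - m" using a m by simp
  have y: "length (drop m (l @ [hd u])) + length (tl u) = length l + length u - m" using u m by simp
  show ?thesis
  proof (cases "length l + 1 + a \<le> length l + length u")
    case True
    have "derived \<Phi> (l @ u @ r) S (length l + 1 + a) (length l + length u) \<longleftrightarrow>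
      derived \<Phi> (drop m (l @ [hd u]) @ tl u @ r) S (length l + 1 + a - m) (length l + length u - m)"
      unfolding m_def by (rule restrict_tl(1)[OF u l]) (use a True in auto)
    then show ?thesis unfolding end_atoms_iff diff_zero x y using a by auto
  next
    case False
    then show ?thesis unfolding end_atoms_iff diff_zero x y using derived_bounds by fastforce
  qed
qed

lemma fires_inside_butlast_iff:
  fixes \<Phi> :: "'s horn_formula"
  assumes u: "2 \<le> length u"
  shows "fires_inside \<Phi> l (butlast u) (take (radius \<Phi> + 1) (last u # r)) \<longleftrightarrow>
    (\<exists>x y. length l < x \<and> x \<le> y \<and> y < length l + length u \<and> bot_fires \<Phi> (l @ u @ r) x y)"
proof -
  have "(length l < x \<and> x \<le> y \<and> y \<le> length l + length (butlast u) \<and>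
      bot_fires \<Phi> (l @ butlast u @ take (radius \<Phi> + 1) (last u # r)) x y) \<longleftrightarrow>
    (length l < x \<and> x \<le> y \<and> y < length l + length u \<and> bot_fires \<Phi> (l @ u @ r) x y)" for x y
    using restrict_butlast(2)[OF u, of x y l \<Phi> r] u by auto
  then show ?thesis unfolding fires_inside_def by simp
qed

lemma fires_inside_tl_iff:
  fixes \<Phi> :: "'s horn_formula" and l u r :: "'s list"
  defines "m \<equiv> length l + 1 - (radius \<Phi> + 1)"
  assumes u: "2 \<le> length u" and l: "length l \<le> radius \<Phi> + 1"
  shows "fires_inside \<Phi> (drop m (l @ [hd u])) (tl u) r \<longleftrightarrow>
    (\<exists>x y. length l + 1 < x \<and> x \<le> y \<and> y \<le> length l + length u \<and> bot_fires \<Phi> (l @ u @ r) x y)"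
proof
  have m: "m \<le> length l + 1" unfolding m_def by simp
  then have len: "length (drop m (l @ [hd u])) = length l + 1 - m" by simp
  show "fires_inside \<Phi> (drop m (l @ [hd u])) (tl u) r \<Longrightarrow>
    \<exists>x y. length l + 1 < x \<and> x \<le> y \<and> y \<le> length l + length u \<and> bot_fires \<Phi> (l @ u @ r) x y"
  proof -
    assume "fires_inside \<Phi> (drop m (l @ [hd u])) (tl u) r"
    then obtain x y where xy: "length l + 1 - m < x" "x \<le> y" "y \<le> length l + 1 - m + length (tl u)"
      and fires: "bot_fires \<Phi> (drop m (l @ [hd u]) @ tl u @ r) x y"
      unfolding fires_inside_def len by blast
    have "bot_fires \<Phi> (l @ u @ r) (x + m) (y + m)"
      using restrict_tl(2)[OF u l, of "x + m" "y + m" r] xy fires m u unfolding m_def by auto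
    then show ?thesis using xy m u by (intro exI[of _ "x + m"] exI[of _ "y + m"]) auto
  qed
  show "\<exists>x y. length l + 1 < x \<and> x \<le> y \<and> y \<le> length l + length u \<and> bot_fires \<Phi> (l @ u @ r) x y \<Longrightarrow>
    fires_inside \<Phi> (drop m (l @ [hd u])) (tl u) r"
  proof -
    assume "\<exists>x y. length l + 1 < x \<and> x \<le> y \<and> y \<le> length l + length u \<and> bot_fires \<Phi> (l @ u @ r) x y"
    then obtain x y where xy: "length l + 1 < x" "x \<le> y" "y \<le> length l + length u"
      and fires: "bot_fires \<Phi> (l @ u @ r) x y" by blast
    have "bot_fires \<Phi> (drop m (l @ [hd u]) @ tl u @ r) (x - m) (y - m)"
      using restrict_tl(2)[OF u l, of x y r] xy fires unfolding m_def by auto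
    then show ?thesis unfolding fires_inside_def using xy m u
      by (intro exI[of _ "x - m"] exI[of _ "y - m"]) auto
  qed
qed

text \<open>An interval of \<open>u\<close> either misses its last letter, misses its first letter, or is all of \<open>u\<close>.\<close>

lemma fires_inside_decomp:
  fixes \<Phi> :: "'s horn_formula" and l u r :: "'s list"
  defines "m \<equiv> length l + 1 - (radius \<Phi> + 1)"
  assumes u: "2 \<le> length u" and l: "length l \<le> radius \<Phi> + 1"
  shows "fires_inside \<Phi> l u r \<longleftrightarrow> fires_inside \<Phi> l (butlast u) (take (radius \<Phi> + 1) (last u # r)) \<or>
     fires_inside \<Phi> (drop m (l @ [hd u])) (tl u) r \<or> bot_fires \<Phi> (l @ u @ r) (length l + 1) (length l + length u)"
proof -
  let ?F = "bot_fires \<Phi> (l @ u @ r)"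
  have "(\<exists>x y. length l < x \<and> x \<le> y \<and> y \<le> length l + length u \<and> ?F x y) \<longleftrightarrow>
    (\<exists>x y. length l < x \<and> x \<le> y \<and> y < length l + length u \<and> ?F x y) \<or>
    (\<exists>x y. length l + 1 < x \<and> x \<le> y \<and> y \<le> length l + length u \<and> ?F x y) \<or>
    ?F (length l + 1) (length l + length u)" (is "?lhs \<longleftrightarrow> ?rhs")
  proof
    assume ?lhs
    then obtain x y where xy: "length l < x" "x \<le> y" "y \<le> length l + length u" and "?F x y"
      by blast
    show ?rhs
    proof (cases "y < length l + length u \<or> length l + 1 < x")
      case True
      then show ?rhs using xy \<open>?F x y\<close> by blast
    next
      case False
      then have "x = length l + 1" "y = length l + length u" using xy by auto
      then show ?rhs using \<open>?F x y\<close> by simp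
    qed
  next
    assume ?rhs
    then show ?lhs
    proof (elim disjE exE conjE)
      fix x y assume "length l < x" "x \<le> y" "y < length l + length u" "?F x y"
      then show ?lhs by (intro exI[of _ x] exI[of _ y]) simp
    next
      fix x y assume "length l + 1 < x" "x \<le> y" "y \<le> length l + length u" "?F x y"
      then show ?lhs by (intro exI[of _ x] exI[of _ y]) simp
    next
      assume "?F (length l + 1) (length l + length u)"
      then show ?lhs using u by (intro exI[of _ "length l + 1"] exI[of _ "length l + length u"]) simp
    qed
  qed
  then show ?thesis unfolding fires_inside_butlast_iff[OF u] fires_inside_tl_iff[OF u l, folded m_def]
    unfolding fires_inside_def .
qed
text \<open>What a cell of the trellis automaton stores about the factor \<open>u\<close> it spans: for every
  context \<open>l _ r\<close> short enough to be all that a radius-bounded hypothesis can see beyond \<open>u\<close>,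
  the atoms derived near the corner \<open>[first letter, last letter]\<close> of \<open>u\<close> and whether \<open>\<bottom>\<close>
  fires inside \<open>u\<close>; together with the first and last \<open>2 * radius + 2\<close> letters of \<open>u\<close>.\<close>

definition profile :: "'s horn_formula \<Rightarrow> 's list \<Rightarrow>
    ((('s list \<times> 's list) \<times> (nat \<times> nat \<times> nat) set \<times> bool) set \<times> 's list \<times> 's list)" where
  "profile \<Phi> u = ({((l, r), end_atoms \<Phi> l u r, fires_inside \<Phi> l u r) | l r.
       length l \<le> radius \<Phi> + 1 \<and> length r \<le> radius \<Phi> + 1},
     take (2 * radius \<Phi> + 2) u, take (2 * radius \<Phi> + 2) (rev u))"

lemma profile_context_eq:
  assumes "fst (profile \<Phi> u) = fst (profile \<Phi> v)" "length l \<le> radius \<Phi> + 1" "length r \<le> radius \<Phi> + 1"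
  shows "end_atoms \<Phi> l u r = end_atoms \<Phi> l v r \<and> fires_inside \<Phi> l u r = fires_inside \<Phi> l v r"
proof -
  have "((l, r), end_atoms \<Phi> l u r, fires_inside \<Phi> l u r) \<in> fst (profile \<Phi> u)"
    using assms(2,3) unfolding profile_def by auto
  then have "((l, r), end_atoms \<Phi> l u r, fires_inside \<Phi> l u r) \<in> fst (profile \<Phi> v)"
    using assms(1) by simp
  then show ?thesis unfolding profile_def by auto
qed

lemma end_atoms_off_corner_cong:
  fixes \<Phi> :: "'s horn_formula"
  assumes lu: "2 \<le> length u" and lv: "2 \<le> length v"
    and hd: "hd u = hd v" and last: "last u = last v"
    and butlast: "fst (profile \<Phi> (butlast u)) = fst (profile \<Phi> (butlast v))"
    and tl: "fst (profile \<Phi> (tl u)) = fst (profile \<Phi> (tl v))"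
    and l: "length l \<le> radius \<Phi> + 1" and r: "length r \<le> radius \<Phi> + 1"
    and ab: "a \<le> radius \<Phi>" "b \<le> radius \<Phi>" "(a, b) \<noteq> (0, 0)"
  shows "(S, a, b) \<in> end_atoms \<Phi> l u r \<longleftrightarrow> (S, a, b) \<in> end_atoms \<Phi> l v r"
proof (cases "1 \<le> b")
  case True
  let ?r = "take (radius \<Phi> + 1) (last u # r)"
  have "end_atoms \<Phi> l (butlast u) ?r = end_atoms \<Phi> l (butlast v) ?r"
    using profile_context_eq[OF butlast l] by simp
  then show ?thesis
    using end_atoms_butlast[OF lu True ab(2), of S a l r] end_atoms_butlast[OF lv True ab(2), of S a l r] last
    by simp
next
  case False
  then have b: "b = 0" and a: "1 \<le> a" using ab by auto
  let ?l = "drop (length l + 1 - (radius \<Phi> + 1)) (l @ [hd u])"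
  have "end_atoms \<Phi> ?l (tl u) r = end_atoms \<Phi> ?l (tl v) r"
    using profile_context_eq[OF tl _ r] l by simp
  then show ?thesis
    using end_atoms_tl[OF lu a ab(1) l, of S r] end_atoms_tl[OF lv a ab(1) l, of S r] hd
    unfolding b by simp
qed

lemma derived_whole_iff:
  assumes lu: "2 * radius \<Phi> + 2 \<le> length u" and lv: "2 * radius \<Phi> + 2 \<le> length v"
    and tu: "take (2 * radius \<Phi> + 2) u = take (2 * radius \<Phi> + 2) v"
    and tr: "take (2 * radius \<Phi> + 2) (rev u) = take (2 * radius \<Phi> + 2) (rev v)"
    and off_corner: "\<And>S a b. a \<le> radius \<Phi> \<Longrightarrow> b \<le> radius \<Phi> \<Longrightarrow> (a, b) \<noteq> (0, 0) \<Longrightarrow>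
       derived \<Phi> (l @ u @ r) S (length l + 1 + a) (length l + length u - b) \<longleftrightarrow>
       derived \<Phi> (l @ v @ r) S (length l + 1 + a) (length l + length v - b)"
  shows "derived \<Phi> (l @ u @ r) R (length l + 1) (length l + length u) \<longleftrightarrow>
    derived \<Phi> (l @ v @ r) R (length l + 1) (length l + length v)"
proof
  show "derived \<Phi> (l @ u @ r) R (length l + 1) (length l + length u) \<Longrightarrow>
      derived \<Phi> (l @ v @ r) R (length l + 1) (length l + length v)"
    by (rule derived_whole_transfer[OF lu lv tu tr]) (use off_corner in blast)
  show "derived \<Phi> (l @ v @ r) R (length l + 1) (length l + length v) \<Longrightarrow>
      derived \<Phi> (l @ u @ r) R (length l + 1) (length l + length u)"
    by (rule derived_whole_transfer[OF lv lu tu[symmetric] tr[symmetric]]) (use off_corner in blast)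
qed

lemma profile_context_cong:
  fixes \<Phi> :: "'s horn_formula"
  assumes lu: "2 * radius \<Phi> + 2 \<le> length u" and lv: "2 * radius \<Phi> + 2 \<le> length v"
    and tu: "take (2 * radius \<Phi> + 2) u = take (2 * radius \<Phi> + 2) v"
    and tr: "take (2 * radius \<Phi> + 2) (rev u) = take (2 * radius \<Phi> + 2) (rev v)"
    and hd: "hd u = hd v" and last: "last u = last v"
    and butlast: "fst (profile \<Phi> (butlast u)) = fst (profile \<Phi> (butlast v))"
    and tl: "fst (profile \<Phi> (tl u)) = fst (profile \<Phi> (tl v))"
    and l: "length l \<le> radius \<Phi> + 1" and r: "length r \<le> radius \<Phi> + 1"
  shows "end_atoms \<Phi> l u r = end_atoms \<Phi> l v r \<and> fires_inside \<Phi> l u r = fires_inside \<Phi> l v r"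
proof
  have lu2: "2 \<le> length u" and lv2: "2 \<le> length v" using lu lv by auto
  have off_corner: "derived \<Phi> (l @ u @ r) S (length l + 1 + a) (length l + length u - b) \<longleftrightarrow>
      derived \<Phi> (l @ v @ r) S (length l + 1 + a) (length l + length v - b)"
    if "a \<le> radius \<Phi>" "b \<le> radius \<Phi>" "(a, b) \<noteq> (0, 0)" for S a b
    using end_atoms_off_corner_cong[OF lu2 lv2 hd last butlast tl l r that, of S] that
    unfolding end_atoms_iff by simp
  have atoms: "derived \<Phi> (l @ u @ r) S (length l + 1 + a) (length l + length u - b) \<longleftrightarrow>
      derived \<Phi> (l @ v @ r) S (length l + 1 + a) (length l + length v - b)"
    if "a \<le> radius \<Phi>" "b \<le> radius \<Phi>" for S a b
    using off_corner[OF that] derived_whole_iff[OF lu lv tu tr off_corner] by (cases "(a, b) = (0, 0)") auto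
  then show "end_atoms \<Phi> l u r = end_atoms \<Phi> l v r" unfolding end_atoms_def by auto
  have "bot_fires \<Phi> (l @ u @ r) (length l + 1) (length l + length u) \<longleftrightarrow>
      bot_fires \<Phi> (l @ v @ r) (length l + 1) (length l + length v)"
    using bot_fires_whole_transfer[OF lu lv tu tr] bot_fires_whole_transfer[OF lv lu tu[symmetric] tr[symmetric]]
      atoms by blast
  moreover have "fires_inside \<Phi> l (butlast u) (take (radius \<Phi> + 1) (last u # r)) =
      fires_inside \<Phi> l (butlast v) (take (radius \<Phi> + 1) (last v # r))"
    using profile_context_eq[OF butlast l] last by simp
  moreover have "fires_inside \<Phi> (drop (length l + 1 - (radius \<Phi> + 1)) (l @ [hd u])) (tl u) r =
      fires_inside \<Phi> (drop (length l + 1 - (radius \<Phi> + 1)) (l @ [hd v])) (tl v) r"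
    using profile_context_eq[OF tl _ r] l hd by simp
  ultimately show "fires_inside \<Phi> l u r = fires_inside \<Phi> l v r"
    using fires_inside_decomp[OF lu2 l, of r] fires_inside_decomp[OF lv2 l, of r] by simp
qed

lemma hd_last_take_of_butlast_tl:
  assumes lu: "2 \<le> length u" and lv: "2 \<le> length v"
    and butlast: "take (Suc n) (butlast u) = take (Suc n) (butlast v)"
      "take (Suc n) (rev (butlast u)) = take (Suc n) (rev (butlast v))"
    and tl: "take (Suc n) (tl u) = take (Suc n) (tl v)"
      "take (Suc n) (rev (tl u)) = take (Suc n) (rev (tl v))"
  shows "hd u = hd v" "last u = last v"
    "take (Suc n) u = take (Suc n) v" "take (Suc n) (rev u) = take (Suc n) (rev v)"
proof -
  have ne: "butlast u \<noteq> []" "butlast v \<noteq> []" "tl u \<noteq> []" "tl v \<noteq> []" "u \<noteq> []" "v \<noteq> []"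
    using lu lv by (cases u; cases v; auto)+
  have "hd (butlast w) = hd w" if "2 \<le> length w" for w :: "'a list"
    using that by (cases w) auto
  then show hd: "hd u = hd v" using arg_cong[OF butlast(1), of hd] lu lv by simp
  have "hd (rev (tl u)) = hd (rev (tl v))" using arg_cong[OF tl(2), of hd] by simp
  then show last: "last u = last v" using ne by (simp add: hd_rev last_tl)
  have take: "take (Suc n) w = hd w # take n (take (Suc n) (tl w))" if "w \<noteq> []" for w :: "'a list"
    using that by (simp add: take_Suc)
  show "take (Suc n) u = take (Suc n) v"
    unfolding take[OF ne(5)] take[OF ne(6)] using hd tl(1) by simp
  have take_rev: "take (Suc n) (rev w) = last w # take n (take (Suc n) (rev (butlast w)))"
    if "w \<noteq> []" for w :: "'a list"
  proof -
    have "rev w = last w # rev (butlast w)" using that by (simp add: rev_eq_Cons_iff)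
    then show ?thesis unfolding \<open>rev w = _\<close> by simp
  qed
  show "take (Suc n) (rev u) = take (Suc n) (rev v)"
    unfolding take_rev[OF ne(5)] take_rev[OF ne(6)] using last butlast(2) by simp
qed

lemma profile_cong:
  fixes \<Phi> :: "'s horn_formula"
  assumes lu: "2 \<le> length u" and lv: "2 \<le> length v"
    and butlast: "profile \<Phi> (butlast u) = profile \<Phi> (butlast v)"
    and tl: "profile \<Phi> (tl u) = profile \<Phi> (tl v)"
  shows "profile \<Phi> u = profile \<Phi> v"
proof -
  let ?N = "2 * radius \<Phi> + 2"
  have "snd (profile \<Phi> (butlast u)) = snd (profile \<Phi> (butlast v))"
    "snd (profile \<Phi> (tl u)) = snd (profile \<Phi> (tl v))"
    using butlast tl by simp_all
  then have "take (Suc (2 * radius \<Phi> + 1)) (butlast u) = take (Suc (2 * radius \<Phi> + 1)) (butlast v)"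
    "take (Suc (2 * radius \<Phi> + 1)) (rev (butlast u)) = take (Suc (2 * radius \<Phi> + 1)) (rev (butlast v))"
    "take (Suc (2 * radius \<Phi> + 1)) (tl u) = take (Suc (2 * radius \<Phi> + 1)) (tl v)"
    "take (Suc (2 * radius \<Phi> + 1)) (rev (tl u)) = take (Suc (2 * radius \<Phi> + 1)) (rev (tl v))"
    unfolding profile_def by simp_all
  note ends = hd_last_take_of_butlast_tl[OF lu lv this]
  have tu: "take ?N u = take ?N v" and tr: "take ?N (rev u) = take ?N (rev v)"
    using ends(3,4) by simp_all
  show ?thesis
  proof (cases "length u < ?N \<or> length v < ?N")
    case True
    then have "length u < ?N" "length v < ?N" using arg_cong[OF tu, of length] by auto
    then have "u = v" using tu by simp
    then show ?thesis by simp
  next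
    case False
    then have lu': "?N \<le> length u" and lv': "?N \<le> length v" by auto
    have "fst (profile \<Phi> w) = fst (profile \<Phi> w')" if "profile \<Phi> w = profile \<Phi> w'" for w w'
      using that by simp
    note context_eq = profile_context_cong[OF lu' lv' tu tr ends(1,2) this[OF butlast] this[OF tl]]
    have "fst (profile \<Phi> u) = fst (profile \<Phi> v)"
      using context_eq unfolding profile_def by auto
    then show ?thesis using tu tr unfolding profile_def by simp
  qed
qed

lemma no_fires_inside_iff_profile:
  "\<not> fires_inside \<Phi> [] w [] \<longleftrightarrow> (\<exists>e. (([], []), e, False) \<in> fst (profile \<Phi> w))"
proof
  assume "\<not> fires_inside \<Phi> [] w []"
  then have "(([], []), end_atoms \<Phi> [] w [], False) \<in> fst (profile \<Phi> w)"
    unfolding profile_def by force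
  then show "\<exists>e. (([], []), e, False) \<in> fst (profile \<Phi> w)" by blast
next
  assume "\<exists>e. (([], []), e, False) \<in> fst (profile \<Phi> w)"
  then obtain e where "(([], []), e, False) \<in> fst (profile \<Phi> w)" by blast
  then have "\<exists>l r. (([] :: 'a list, [] :: 'a list), e, False) = ((l, r), end_atoms \<Phi> l w r, fires_inside \<Phi> l w r)"
    unfolding profile_def by simp
  then show "\<not> fires_inside \<Phi> [] w []" by auto
qed

lemma fires_inside_Nil_iff: "fires_inside \<Phi> [] w [] \<longleftrightarrow> (\<exists>x y. bot_fires \<Phi> w x y)"
proof
  assume "\<exists>x y. bot_fires \<Phi> w x y"
  then obtain x y where fires: "bot_fires \<Phi> w x y" by blast
  then show "fires_inside \<Phi> [] w []" using bot_fires_bounds[OF fires] unfolding fires_inside_def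
    by (intro exI[of _ x] exI[of _ y]) simp
qed (auto simp: fires_inside_def)

lemma horn_lang_eq_profile:
  "horn_lang \<Phi> = {w. w \<noteq> [] \<and> (\<exists>e. (([], []), e, False) \<in> fst (profile \<Phi> w))}"
  unfolding horn_lang_def horn_sat_iff_no_bot_fires no_fires_inside_iff_profile[symmetric] fires_inside_Nil_iff ..

lemma finite_profiles:
  fixes \<Phi> :: "('s::finite) horn_formula"
  shows "finite (profile \<Phi> ` {w. w \<noteq> []})"
proof -
  define k where "k = radius \<Phi>"
  define Heads where "Heads = (\<lambda>cl. the (snd cl)) ` set \<Phi>"
  define Short where "Short n = {xs :: 's list. length xs \<le> n}" for n
  have finite_Short: "finite (Short n)" for n
    using finite_lists_length_le[OF finite_UNIV[where 'a = 's], of n] unfolding Short_def by simp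
  have atoms: "end_atoms \<Phi> l u r \<subseteq> Heads \<times> {..k} \<times> {..k}" for l u r
  proof
    fix z assume "z \<in> end_atoms \<Phi> l u r"
    then obtain R a b where z: "z = (R, a, b)" and ab: "a \<le> k" "b \<le> k"
      and "derived \<Phi> (l @ u @ r) R (length l + 1 + a) (length l + length u - b)"
      unfolding end_atoms_def k_def by auto
    then obtain hs where "(hs, Some R) \<in> set \<Phi>" using derived_head by blast
    then have "R \<in> Heads" unfolding Heads_def by force
    then show "z \<in> Heads \<times> {..k} \<times> {..k}" using z ab by auto
  qed
  have "profile \<Phi> w \<in> Pow ((Short (k + 1) \<times> Short (k + 1)) \<times> Pow (Heads \<times> {..k} \<times> {..k}) \<times> UNIV)
      \<times> Short (2 * k + 2) \<times> Short (2 * k + 2)" for w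
    using atoms unfolding profile_def Short_def k_def by auto
  then have "profile \<Phi> ` {w. w \<noteq> []} \<subseteq> Pow ((Short (k + 1) \<times> Short (k + 1)) \<times> Pow (Heads \<times> {..k} \<times> {..k})
      \<times> (UNIV :: bool set)) \<times> Short (2 * k + 2) \<times> Short (2 * k + 2)"
    by blast
  moreover have "finite (Pow ((Short (k + 1) \<times> Short (k + 1)) \<times> Pow (Heads \<times> {..k} \<times> {..k})
      \<times> (UNIV :: bool set)) \<times> Short (2 * k + 2) \<times> Short (2 * k + 2))"
    using finite_Short unfolding Heads_def by simp
  ultimately show ?thesis by (rule finite_subset)
qed

lemma profile_singleton_inj: "profile \<Phi> [a] = profile \<Phi> [b] \<Longrightarrow> a = b"
  unfolding profile_def by simp

theorem lemma10:
  shows "(incl_ESO_HORN :: ('s::finite) list set set) \<subseteq> Trellis"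
proof
  fix L :: "'s list set" assume "L \<in> incl_ESO_HORN"
  then obtain \<Phi> where L: "L = horn_lang \<Phi>" by (auto simp: incl_ESO_HORN_def)
  have "horn_lang \<Phi> \<in> Trellis" unfolding horn_lang_eq_profile
    by (rule compositional_invariant_in_Trellis[OF finite_profiles profile_cong profile_singleton_inj])
  then show "L \<in> Trellis" unfolding L .
qed

end
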